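(* Let $n \ge 3$ be an integer and let $I$ be a degree-based topological index with coefficients $c_{12},c_{13},c_{22},c_{23},c_{33}$. Define $c'_{12} = c_{12}-4c_{22}+3c_{23}$, $c'_{13} = c_{13}-3c_{22}+2c_{23}$, $c'_{33} = c_{22}-2c_{23}+c_{33}$. If $c'_{13}<c'_{12}<-c'_{33}<0$, then the path $P_n$ on $n$ vertices is, up to isomorphism, the only tree in $\mathcal{G}_3(n,n-1)$ that maximizes $I$.
   Context: For integers $n,m$, $\mathcal{G}_3(n,m)$ denotes the set of simple connected undirected graphs (chemical graphs) with $n$ vertices, $m$ edges and maximum degree at most $3$; in particular $\mathcal{G}_3(n,n-1)$ is the set of trees of order $n$ with maximum degree at most $3$. For a graph $G$ and $1\le i\le j$, an $ij$-edge is an edge whose endpoints have degrees $i$ and $j$, and $m_{ij}$ denotes the number of $ij$-edges of $G$. A degree-based topological index $I$ is a function on chemical graphs of order $n\ge 3$ of the form $I(G)=c_{12}m_{12}+c_{13}m_{13}+c_{22}m_{22}+c_{23}m_{23}+c_{33}m_{33}$, where the $c_{ij}$ are fixed real numbers. *)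

theory Defs
  imports Complex_Main
begin

definition simple_graph :: "'a set \<Rightarrow> 'a set set \<Rightarrow> bool" where
  "simple_graph V E \<longleftrightarrow> finite V \<and> (\<forall>e\<in>E. \<exists>u v. u \<in> V \<and> v \<in> V \<and> u \<noteq> v \<and> e = {u, v})"

definition degree :: "'a set set \<Rightarrow> 'a \<Rightarrow> nat" where
  "degree E v = card {e \<in> E. v \<in> e}"

definition connected_graph :: "'a set \<Rightarrow> 'a set set \<Rightarrow> bool" where
  "connected_graph V E \<longleftrightarrow> (\<forall>u\<in>V. \<forall>v\<in>V. (u, v) \<in> {(x, y). {x, y} \<in> E}\<^sup>*)"

definition chem_graph :: "nat \<Rightarrow> nat \<Rightarrow> 'a set \<Rightarrow> 'a set set \<Rightarrow> bool" where
  "chem_graph n m V E \<longleftrightarrow> simple_graph V E \<and> connected_graph V E \<and> card V = n \<and> card E = m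
     \<and> (\<forall>v\<in>V. degree E v \<le> 3)"

definition m_edges :: "nat \<Rightarrow> nat \<Rightarrow> 'a set set \<Rightarrow> nat" where
  "m_edges i j E = card {e \<in> E. \<exists>u v. u \<noteq> v \<and> e = {u, v} \<and> {degree E u, degree E v} = {i, j}}"

definition top_index :: "real \<Rightarrow> real \<Rightarrow> real \<Rightarrow> real \<Rightarrow> real \<Rightarrow> 'a set set \<Rightarrow> real" where
  "top_index c12 c13 c22 c23 c33 E =
     c12 * real (m_edges 1 2 E) + c13 * real (m_edges 1 3 E) + c22 * real (m_edges 2 2 E)
     + c23 * real (m_edges 2 3 E) + c33 * real (m_edges 3 3 E)"

definition graph_iso :: "'a set \<Rightarrow> 'a set set \<Rightarrow> 'b set \<Rightarrow> 'b set set \<Rightarrow> bool" where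
  "graph_iso V1 E1 V2 E2 \<longleftrightarrow> (\<exists>f. bij_betw f V1 V2 \<and>
      (\<forall>u\<in>V1. \<forall>v\<in>V1. {u, v} \<in> E1 \<longleftrightarrow> {f u, f v} \<in> E2))"

definition path_V :: "nat \<Rightarrow> nat set" where
  "path_V n = {0..<n}"

definition path_E :: "nat \<Rightarrow> nat set set" where
  "path_E n = {{i, Suc i} | i. Suc i < n}"

end

theory Submission
  imports Defs
begin

text \<open>
  In a chemical tree of order n \<ge> 3 no edge joins two leaves, so counting edge ends by degree
  expresses n1, n2, n3 and the number n - 1 of edges linearly in the m_ij. Eliminating m22 and m23
  gives I = c22 (n + 5) - 6 c23 + c12' m12 + c13' m13 + c33' m33 with m12 + m13 = n3 + 2, and since
  the degree-3 vertices induce a forest, m33 \<le> n3 - 1 whenever n3 > 0. Hence, if n3 > 0, the index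
  exceeds its value c22 (n + 5) - 6 c23 + 2 c12' at n3 = 0 by at most (c12' + c33') n3 - c33',
  which is at most c12' < 0 under the hypotheses. A tree with n3 = 0 has maximum degree 2, hence
  is a path: the distance from a leaf is an isomorphism onto P_n.
\<close>

lemma simple_graph_finite_edges:
  assumes "simple_graph V E"
  shows "finite E"
proof -
  have "E \<subseteq> Pow V" using assms by (auto simp: simple_graph_def)
  then show ?thesis using assms by (simp add: simple_graph_def finite_subset)
qed

lemma simple_graph_edgeE:
  assumes "simple_graph V E" "e \<in> E"
  obtains u v where "u \<in> V" "v \<in> V" "u \<noteq> v" "e = {u, v}"
  using assms unfolding simple_graph_def by blast

lemma simple_graph_edgeD:
  "simple_graph V E \<Longrightarrow> {x, y} \<in> E \<Longrightarrow> x \<in> V \<and> y \<in> V \<and> x \<noteq> y"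
  unfolding simple_graph_def by (metis doubleton_eq_iff insert_absorb2)

definition adj_rel :: "'a set set \<Rightarrow> ('a \<times> 'a) set" where
  "adj_rel E = {(x, y). {x, y} \<in> E}"

lemma adj_rel_iff [simp]: "(x, y) \<in> adj_rel E \<longleftrightarrow> {x, y} \<in> E"
  by (simp add: adj_rel_def)

lemma connected_graph_reach:
  "connected_graph V E \<Longrightarrow> u \<in> V \<Longrightarrow> v \<in> V \<Longrightarrow> \<exists>k. (u, v) \<in> adj_rel E ^^ k"
  unfolding connected_graph_def adj_rel_def by (meson rtrancl_power)

text \<open>Unspecified (LEAST of an empty set) for vertices not reachable from S.\<close>
definition dist_from :: "'a set set \<Rightarrow> 'a set \<Rightarrow> 'a \<Rightarrow> nat" where
  "dist_from E S v = (LEAST k. \<exists>s\<in>S. (s, v) \<in> adj_rel E ^^ k)"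

lemma dist_from_le: "s \<in> S \<Longrightarrow> (s, v) \<in> adj_rel E ^^ k \<Longrightarrow> dist_from E S v \<le> k"
  unfolding dist_from_def by (rule Least_le) blast

lemma dist_from_source: "s \<in> S \<Longrightarrow> dist_from E S s = 0"
  using dist_from_le[where v = s and k = 0] by simp

lemma dist_from_attained:
  assumes "s \<in> S" "(s, v) \<in> adj_rel E ^^ k"
  shows "\<exists>s'\<in>S. (s', v) \<in> adj_rel E ^^ dist_from E S v"
  unfolding dist_from_def by (rule LeastI_ex) (use assms in blast)

context
  fixes V :: "'a set" and E S
  assumes sg: "simple_graph V E" and conn: "connected_graph V E"
    and sources: "S \<subseteq> V" "S \<noteq> {}"
begin

lemma dist_from_attained_connected:
  assumes "v \<in> V"
  shows "\<exists>s\<in>S. (s, v) \<in> adj_rel E ^^ dist_from E S v"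
proof -
  obtain s where "s \<in> S" using sources by blast
  moreover obtain k where "(s, v) \<in> adj_rel E ^^ k"
    using connected_graph_reach[OF conn] \<open>s \<in> S\<close> sources assms by blast
  ultimately show ?thesis by (rule dist_from_attained)
qed

lemma dist_from_eq_0_iff: "v \<in> V \<Longrightarrow> dist_from E S v = 0 \<longleftrightarrow> v \<in> S"
  using dist_from_attained_connected dist_from_source by fastforce

lemma dist_from_edge_le:
  assumes "u \<in> V" "{u, v} \<in> E"
  shows "dist_from E S v \<le> Suc (dist_from E S u)"
proof -
  obtain s where "s \<in> S" "(s, u) \<in> adj_rel E ^^ dist_from E S u"
    using dist_from_attained_connected[OF assms(1)] by blast
  moreover have "(u, v) \<in> adj_rel E" using assms(2) by simp
  ultimately show ?thesis by (meson dist_from_le relpow_Suc_I)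
qed

lemma dist_from_parent:
  assumes "v \<in> V" "v \<notin> S"
  obtains w where "w \<in> V" "{w, v} \<in> E" "Suc (dist_from E S w) = dist_from E S v"
proof -
  obtain s where s: "s \<in> S" "(s, v) \<in> adj_rel E ^^ dist_from E S v"
    using dist_from_attained_connected[OF assms(1)] by blast
  then obtain j where j: "dist_from E S v = Suc j"
    using assms(2) by (cases "dist_from E S v") auto
  then obtain w where w: "(s, w) \<in> adj_rel E ^^ j" "{w, v} \<in> E"
    using s(2) by (auto elim: relpow_Suc_E)
  obtain s' where s': "s' \<in> S" "(s', w) \<in> adj_rel E ^^ dist_from E S w"
    using dist_from_attained[OF s(1) w(1)] by blast
  have "dist_from E S w \<le> j" using dist_from_le[OF s(1) w(1)] .
  moreover have "dist_from E S v \<le> Suc (dist_from E S w)"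
    using s' w(2) by (meson adj_rel_iff dist_from_le relpow_Suc_I)
  moreover have "w \<in> V" using simple_graph_edgeD[OF sg w(2)] by simp
  ultimately show thesis using w(2) j by (intro that[of w]) simp_all
qed

lemma dist_from_intermediate:
  assumes "v \<in> V" "k \<le> dist_from E S v"
  shows "\<exists>u\<in>V. dist_from E S u = k"
  using assms
proof (induction "dist_from E S v" arbitrary: v)
  case (Suc j)
  show ?case
  proof (cases "k = Suc j")
    case False
    have "v \<notin> S" using Suc.hyps(2) Suc.prems(1) dist_from_source by fastforce
    then obtain w where "w \<in> V" "Suc (dist_from E S w) = dist_from E S v"
      using dist_from_parent[OF Suc.prems(1)] by blast
    moreover from this have "j = dist_from E S w" using Suc.hyps(2) by simp
    moreover have "k \<le> j" using Suc.hyps(2) Suc.prems(2) False by simp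
    ultimately show ?thesis using Suc.hyps(1) by auto
  qed (use Suc.hyps(2) Suc.prems(1) in auto)
qed auto

end

text \<open>Every vertex outside S owns the edge to its BFS parent, and distinct vertices own distinct edges.\<close>
lemma card_outside_le_card_crossing_edges:
  assumes sg: "simple_graph V E" and conn: "connected_graph V E" and S: "S \<subseteq> V" "S \<noteq> {}"
  shows "card (V - S) \<le> card {e\<in>E. \<not> e \<subseteq> S}"
proof -
  let ?d = "dist_from E S"
  define parent where "parent v = (SOME w. {w, v} \<in> E \<and> Suc (?d w) = ?d v)" for v
  have parent: "{parent v, v} \<in> E \<and> Suc (?d (parent v)) = ?d v" if "v \<in> V - S" for v
    unfolding parent_def
    by (rule someI_ex) (use dist_from_parent[OF sg conn S] that in blast)
  have "inj_on (\<lambda>v. {v, parent v}) (V - S)"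
  proof (rule inj_onI)
    fix v v' assume vv': "v \<in> V - S" "v' \<in> V - S" "{v, parent v} = {v', parent v'}"
    show "v = v'"
    proof (rule ccontr)
      assume "v \<noteq> v'"
      then have "v = parent v'" "v' = parent v" using vv'(3) by (auto simp: doubleton_eq_iff)
      then show False using parent[OF vv'(1)] parent[OF vv'(2)] by simp
    qed
  qed
  moreover have "(\<lambda>v. {v, parent v}) ` (V - S) \<subseteq> {e\<in>E. \<not> e \<subseteq> S}"
    using parent by (auto simp: insert_commute)
  moreover have "finite {e\<in>E. \<not> e \<subseteq> S}" using simple_graph_finite_edges[OF sg] by simp
  ultimately show ?thesis by (simp add: card_inj_on_le)
qed

lemma tree_card_induced_edges_le:
  assumes sg: "simple_graph V E" and conn: "connected_graph V E" and S: "S \<subseteq> V" "S \<noteq> {}"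
    and tree: "card E = card V - 1"
  shows "card {e\<in>E. e \<subseteq> S} \<le> card S - 1"
proof -
  have fin: "finite E" "finite V" "finite S"
    using simple_graph_finite_edges[OF sg] sg S(1) finite_subset by (auto simp: simple_graph_def)
  have "E = {e\<in>E. e \<subseteq> S} \<union> {e\<in>E. \<not> e \<subseteq> S}" by blast
  then have "card E = card {e\<in>E. e \<subseteq> S} + card {e\<in>E. \<not> e \<subseteq> S}"
    by (metis (no_types, lifting) card_Un_disjoint disjoint_iff fin(1) finite_Un mem_Collect_eq)
  moreover have "card (V - S) = card V - card S" using S fin by (simp add: card_Diff_subset)
  moreover have "0 < card S" "card S \<le> card V" using S fin by (auto simp: card_gt_0_iff card_mono)
  ultimately show ?thesis
    using card_outside_le_card_crossing_edges[OF sg conn S] tree by linarith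
qed

lemma connected_graph_degree_pos:
  assumes sg: "simple_graph V E" and conn: "connected_graph V E" and two: "card V \<ge> 2"
    and v: "v \<in> V"
  shows "degree E v \<ge> 1"
proof -
  have "\<not> V \<subseteq> {v}"
  proof
    assume "V \<subseteq> {v}"
    then have "card V \<le> card {v}" by (intro card_mono) simp_all
    then show False using two by simp
  qed
  then obtain w where w: "w \<in> V" "w \<noteq> v" by blast
  have "(v, w) \<in> (adj_rel E)\<^sup>*" using conn v w(1) unfolding connected_graph_def adj_rel_def by blast
  then obtain y where "{v, y} \<in> E" using w(2) by (cases rule: converse_rtranclE) auto
  moreover have "finite {e\<in>E. v \<in> e}" using simple_graph_finite_edges[OF sg] by simp
  ultimately show ?thesis unfolding degree_def by (auto simp: Suc_le_eq card_gt_0_iff)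
qed

lemma degree_1_incident_edges:
  assumes "degree E u = 1" "{u, v} \<in> E"
  shows "{e\<in>E. u \<in> e} = {{u, v}}"
proof -
  obtain x where x: "{e\<in>E. u \<in> e} = {x}"
    using assms(1) unfolding degree_def by (meson card_1_singletonE)
  have "{u, v} \<in> {e\<in>E. u \<in> e}" using assms(2) by simp
  then show ?thesis using x by auto
qed

text \<open>Two adjacent leaves form a whole component, so they cannot occur once there are three vertices.\<close>
lemma connected_graph_no_leaf_leaf_edge:
  assumes sg: "simple_graph V E" and conn: "connected_graph V E" and three: "card V \<ge> 3"
    and e: "{u, v} \<in> E" and du: "degree E u = 1" and dv: "degree E v = 1"
  shows False
proof -
  have inc: "{e\<in>E. x \<in> e} = {{u, v}}" if "x \<in> {u, v}" for x
  proof (cases "x = u")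
    case False
    have "{v, u} \<in> E" using e by (simp add: insert_commute)
    then show ?thesis
      using degree_1_incident_edges[OF dv] that False by (simp add: insert_commute)
  qed (simp add: degree_1_incident_edges[OF du e])
  have closed: "x \<in> {u, v}" if "(u, x) \<in> (adj_rel E)\<^sup>*" for x
    using that
  proof (induction rule: rtrancl_induct)
    case (step y z)
    then have "{y, z} \<in> {e\<in>E. y \<in> e}" by simp
    then show ?case using inc[OF step.IH] by (auto simp: doubleton_eq_iff)
  qed simp
  have "u \<in> V" using simple_graph_edgeD[OF sg e] by simp
  then have "V \<subseteq> {u, v}"
    using closed conn unfolding connected_graph_def adj_rel_def by blast
  then have "card V \<le> card {u, v}" by (simp add: card_mono)
  also have "\<dots> \<le> 2" by (simp add: card_insert_if)
  finally show False using three by simp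
qed

lemma sum_card_endpoints_eq_sum_degree:
  assumes sg: "simple_graph V E"
  shows "(\<Sum>e\<in>E. card {x\<in>e. P x}) = (\<Sum>v\<in>{v\<in>V. P v}. degree E v)"
proof -
  have fin: "finite E" "finite V" using sg simple_graph_finite_edges by (auto simp: simple_graph_def)
  have sub: "e \<subseteq> V" if "e \<in> E" for e using sg that by (auto elim: simple_graph_edgeE)
  have "(\<Sum>v\<in>{v\<in>V. P v}. degree E v) = (\<Sum>v\<in>{v\<in>V. P v}. \<Sum>e\<in>E. of_bool (v \<in> e))"
    unfolding degree_def using fin by (simp add: Int_def)
  also have "\<dots> = (\<Sum>e\<in>E. \<Sum>v\<in>{v\<in>V. P v}. of_bool (v \<in> e))" by (rule sum.swap)
  also have "\<dots> = (\<Sum>e\<in>E. card {x\<in>e. P x})"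
  proof (rule sum.cong)
    fix e assume "e \<in> E"
    then have "{v\<in>V. P v} \<inter> {v. v \<in> e} = {x\<in>e. P x}" using sub by blast
    then show "(\<Sum>v\<in>{v\<in>V. P v}. of_bool (v \<in> e)) = card {x\<in>e. P x}" using fin by simp
  qed simp
  finally show ?thesis by simp
qed

definition degree_count :: "'a set \<Rightarrow> 'a set set \<Rightarrow> nat \<Rightarrow> nat" where
  "degree_count V E d = card {v\<in>V. degree E v = d}"

lemma degree_count_handshake:
  "simple_graph V E \<Longrightarrow> d * degree_count V E d = (\<Sum>e\<in>E. card {x\<in>e. degree E x = d})"
  using sum_card_endpoints_eq_sum_degree[of V E "\<lambda>x. degree E x = d"]
  by (simp add: degree_count_def)

definition edge_of_type :: "'a set set \<Rightarrow> nat \<Rightarrow> nat \<Rightarrow> 'a set \<Rightarrow> bool" where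
  "edge_of_type E i j e \<longleftrightarrow> (\<exists>u v. u \<noteq> v \<and> e = {u, v} \<and> {degree E u, degree E v} = {i, j})"

lemma m_edges_eq_card_edge_of_type: "m_edges i j E = card {e\<in>E. edge_of_type E i j e}"
  by (simp add: m_edges_def edge_of_type_def)

lemma m_edges_eq_sum: "finite E \<Longrightarrow> m_edges i j E = (\<Sum>e\<in>E. of_bool (edge_of_type E i j e))"
  by (simp add: m_edges_eq_card_edge_of_type Int_def)

lemma edge_of_type_doubleton:
  "u \<noteq> v \<Longrightarrow> edge_of_type E i j {u, v} \<longleftrightarrow> {degree E u, degree E v} = {i, j}"
  unfolding edge_of_type_def by (smt (verit) doubleton_eq_iff)

lemma card_doubleton_filter:
  assumes "u \<noteq> v"
  shows "card {x\<in>{u, v}. P x} = of_bool (P u) + of_bool (P v)"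
proof -
  have "{x\<in>{u, v}. P x} = (if P u then {u} else {}) \<union> (if P v then {v} else {})" by auto
  then show ?thesis using assms by simp
qed

lemma chem_graph_degree_cases:
  assumes "chem_graph n m V E" "n \<ge> 3" "v \<in> V"
  shows "degree E v \<in> {1, 2, 3}"
  using assms connected_graph_degree_pos[of V E v] unfolding chem_graph_def by force

text \<open>Since connectivity rules out an edge joining two leaves, every edge has exactly one of the five
  types.\<close>
lemma chem_graph_edge_endpoints:
  assumes cg: "chem_graph n m V E" and n: "n \<ge> 3" and e: "e \<in> E"
  defines "t i j \<equiv> of_bool (edge_of_type E i j e) :: nat"
  shows "card {x\<in>e. degree E x = 1} = t 1 2 + t 1 3"
    and "card {x\<in>e. degree E x = 2} = t 1 2 + 2 * t 2 2 + t 2 3"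
    and "card {x\<in>e. degree E x = 3} = t 1 3 + t 2 3 + 2 * t 3 3"
    and "t 1 2 + t 1 3 + t 2 2 + t 2 3 + t 3 3 = 1"
proof -
  have sg: "simple_graph V E" and conn: "connected_graph V E" and cV: "card V = n"
    using cg unfolding chem_graph_def by auto
  obtain u v where uv: "u \<in> V" "v \<in> V" "u \<noteq> v" "e = {u, v}"
    using simple_graph_edgeE[OF sg e] by blast
  have "degree E u \<in> {1, 2, 3}" "degree E v \<in> {1, 2, 3}"
    using chem_graph_degree_cases[OF cg n] uv by auto
  moreover have "\<not> (degree E u = 1 \<and> degree E v = 1)"
    using connected_graph_no_leaf_leaf_edge[OF sg conn] cV n e uv by auto
  ultimately show "card {x\<in>e. degree E x = 1} = t 1 2 + t 1 3"
    and "card {x\<in>e. degree E x = 2} = t 1 2 + 2 * t 2 2 + t 2 3"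
    and "card {x\<in>e. degree E x = 3} = t 1 3 + t 2 3 + 2 * t 3 3"
    and "t 1 2 + t 1 3 + t 2 2 + t 2 3 + t 3 3 = 1"
    using uv(3) unfolding t_def uv(4) card_doubleton_filter[OF uv(3)]
    by (auto simp: edge_of_type_doubleton doubleton_eq_iff)
qed

lemma chem_graph_counts:
  assumes cg: "chem_graph n m V E" and n: "n \<ge> 3"
  shows "degree_count V E 1 = m_edges 1 2 E + m_edges 1 3 E"
    and "2 * degree_count V E 2 = m_edges 1 2 E + 2 * m_edges 2 2 E + m_edges 2 3 E"
    and "3 * degree_count V E 3 = m_edges 1 3 E + m_edges 2 3 E + 2 * m_edges 3 3 E"
    and "m = m_edges 1 2 E + m_edges 1 3 E + m_edges 2 2 E + m_edges 2 3 E + m_edges 3 3 E"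
    and "n = degree_count V E 1 + degree_count V E 2 + degree_count V E 3"
proof -
  have sg: "simple_graph V E" and cV: "card V = n" and cE: "card E = m"
    using cg unfolding chem_graph_def by auto
  have fin: "finite E" "finite V" using sg simple_graph_finite_edges by (auto simp: simple_graph_def)
  define t where "t i j e = (of_bool (edge_of_type E i j e) :: nat)" for i j e
  have m_sum: "m_edges i j E = (\<Sum>e\<in>E. t i j e)" for i j
    unfolding t_def using m_edges_eq_sum[OF fin(1)] .
  note endpoints = chem_graph_edge_endpoints[OF cg n, folded t_def]
  have "1 * degree_count V E 1 = (\<Sum>e\<in>E. t 1 2 e + t 1 3 e)"
    unfolding degree_count_handshake[OF sg] using endpoints(1) by (rule sum.cong[OF refl])
  then show "degree_count V E 1 = m_edges 1 2 E + m_edges 1 3 E"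
    by (simp add: m_sum sum.distrib)
  have "2 * degree_count V E 2 = (\<Sum>e\<in>E. t 1 2 e + 2 * t 2 2 e + t 2 3 e)"
    unfolding degree_count_handshake[OF sg] using endpoints(2) by (rule sum.cong[OF refl])
  then show "2 * degree_count V E 2 = m_edges 1 2 E + 2 * m_edges 2 2 E + m_edges 2 3 E"
    by (simp add: m_sum sum.distrib sum_distrib_left)
  have "3 * degree_count V E 3 = (\<Sum>e\<in>E. t 1 3 e + t 2 3 e + 2 * t 3 3 e)"
    unfolding degree_count_handshake[OF sg] using endpoints(3) by (rule sum.cong[OF refl])
  then show "3 * degree_count V E 3 = m_edges 1 3 E + m_edges 2 3 E + 2 * m_edges 3 3 E"
    by (simp add: m_sum sum.distrib sum_distrib_left)
  have "card E = (\<Sum>e\<in>E. t 1 2 e + t 1 3 e + t 2 2 e + t 2 3 e + t 3 3 e)"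
    using endpoints(4) by simp
  then show "m = m_edges 1 2 E + m_edges 1 3 E + m_edges 2 2 E + m_edges 2 3 E + m_edges 3 3 E"
    using cE by (simp add: m_sum sum.distrib)
  have "card V = (\<Sum>v\<in>V. 1)" by simp
  also have "\<dots> = (\<Sum>v\<in>V. of_bool (degree E v = 1) + of_bool (degree E v = 2)
      + (of_bool (degree E v = 3) :: nat))"
    using chem_graph_degree_cases[OF cg n] by (intro sum.cong) auto
  finally show "n = degree_count V E 1 + degree_count V E 2 + degree_count V E 3"
    using cV fin by (simp add: sum.distrib degree_count_def Int_def)
qed

lemma chem_tree_top_index:
  assumes "chem_graph n (n - 1) V E" "n \<ge> 3"
  shows "top_index c12 c13 c22 c23 c33 E = c22 * (real n + 5) - 6 * c23
      + (c12 - 4*c22 + 3*c23) * real (m_edges 1 2 E) + (c13 - 3*c22 + 2*c23) * real (m_edges 1 3 E)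
      + (c22 - 2*c23 + c33) * real (m_edges 3 3 E)"
proof -
  note counts = chem_graph_counts[OF assms]
  have m22: "real (m_edges 2 2 E) = real n + 5 - 4 * real (m_edges 1 2 E) - 3 * real (m_edges 1 3 E)
      + real (m_edges 3 3 E)"
   and m23: "real (m_edges 2 3 E) = 3 * real (m_edges 1 2 E) + 2 * real (m_edges 1 3 E) - 6
      - 2 * real (m_edges 3 3 E)"
    using counts assms(2) by linarith+
  show ?thesis unfolding top_index_def m22 m23 by (simp add: algebra_simps)
qed

lemma chem_tree_pendant_edges:
  "chem_graph n (n - 1) V E \<Longrightarrow> n \<ge> 3 \<Longrightarrow>
    degree_count V E 3 + 2 = m_edges 1 2 E + m_edges 1 3 E"
  using chem_graph_counts[of n "n - 1" V E] by linarith

lemma chem_tree_m33_less: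
  assumes cg: "chem_graph n (n - 1) V E" and branching: "degree_count V E 3 > 0"
  shows "m_edges 3 3 E < degree_count V E 3"
proof -
  have sg: "simple_graph V E" and conn: "connected_graph V E"
    and tree: "card E = card V - 1" using cg unfolding chem_graph_def by auto
  let ?S = "{v\<in>V. degree E v = 3}"
  have S: "?S \<subseteq> V" "?S \<noteq> {}" using branching by (auto simp: degree_count_def card_gt_0_iff)
  have "{e\<in>E. edge_of_type E 3 3 e} = {e\<in>E. e \<subseteq> ?S}"
  proof (intro Collect_cong conj_cong refl)
    fix e assume "e \<in> E"
    then obtain u v where "u \<in> V" "v \<in> V" "u \<noteq> v" "e = {u, v}"
      using simple_graph_edgeE[OF sg] by blast
    then show "edge_of_type E 3 3 e \<longleftrightarrow> e \<subseteq> ?S" by (auto simp: edge_of_type_doubleton)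
  qed
  then have "m_edges 3 3 E \<le> card ?S - 1"
    using tree_card_induced_edges_le[OF sg conn S tree] by (simp add: m_edges_eq_card_edge_of_type)
  then show ?thesis using branching by (simp add: degree_count_def)
qed

lemma degree_path_le_2: "degree (path_E n) i \<le> 2"
proof -
  have "{e\<in>path_E n. i \<in> e} \<subseteq> {{i - 1, i}, {i, Suc i}}" unfolding path_E_def by auto
  then have "degree (path_E n) i \<le> card {{i - 1, i}, {i, Suc i}}"
    unfolding degree_def by (simp add: card_mono)
  also have "\<dots> \<le> 2" by (simp add: card_insert_if)
  finally show ?thesis .
qed

lemma connected_graph_path: "connected_graph (path_V n) (path_E n)"
proof -
  let ?R = "adj_rel (path_E n)"
  have to_0: "(0, i) \<in> ?R\<^sup>* \<and> (i, 0) \<in> ?R\<^sup>*" if "i < n" for i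
    using that
  proof (induction i)
    case (Suc i)
    then have "(i, Suc i) \<in> ?R" "(Suc i, i) \<in> ?R"
      unfolding path_E_def by (auto simp: insert_commute)
    with Suc show ?case by (meson Suc_lessD converse_rtrancl_into_rtrancl rtrancl.simps)
  qed simp
  have "(u, v) \<in> ?R\<^sup>*" if "u < n" "v < n" for u v
    using to_0[OF that(1)] to_0[OF that(2)] by (meson rtrancl_trans)
  then show ?thesis unfolding connected_graph_def path_V_def adj_rel_def by simp
qed

lemma chem_graph_path: "chem_graph n (n - 1) (path_V n) (path_E n)"
proof -
  have "path_E n = (\<lambda>i. {i, Suc i}) ` {0..<n - 1}" unfolding path_E_def by auto
  moreover have "inj_on (\<lambda>i. {i, Suc i}) {0..<n - 1}" by (auto simp: inj_on_def doubleton_eq_iff)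
  ultimately have "card (path_E n) = n - 1" by (simp add: card_image)
  moreover have "simple_graph (path_V n) (path_E n)"
    unfolding simple_graph_def path_V_def path_E_def
  proof (intro conjI ballI)
    fix e assume "e \<in> {{i, Suc i} |i. Suc i < n}"
    then obtain i where "e = {i, Suc i}" "Suc i < n" by blast
    then show "\<exists>u v. u \<in> {0..<n} \<and> v \<in> {0..<n} \<and> u \<noteq> v \<and> e = {u, v}"
      by (intro exI[of _ i] exI[of _ "Suc i"]) simp
  qed simp
  moreover have "degree (path_E n) v \<le> 3" for v using degree_path_le_2[of n v] by simp
  ultimately show ?thesis
    unfolding chem_graph_def using connected_graph_path by (simp add: path_V_def)
qed

lemma doubleton_in_path_E_iff: "{a, b} \<in> path_E n \<longleftrightarrow> (b = Suc a \<or> a = Suc b) \<and> a < n \<and> b < n"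
  unfolding path_E_def by (auto simp: doubleton_eq_iff)

lemma inj_on_image_eq_lessThan:
  assumes fin: "finite A" and inj: "inj_on f A" and down: "\<And>a k. a \<in> A \<Longrightarrow> k \<le> f a \<Longrightarrow> k \<in> f ` A"
  shows "f ` A = {..<card A}"
proof -
  have "f a < card A" if "a \<in> A" for a
  proof -
    have "{..f a} \<subseteq> f ` A" using down that by blast
    then have "card {..f a} \<le> card (f ` A)" using fin by (intro card_mono) simp_all
    then show ?thesis using card_image[OF inj] by simp
  qed
  then have "f ` A \<subseteq> {..<card A}" by blast
  moreover have "card (f ` A) = card {..<card A}" using card_image[OF inj] by simp
  ultimately show ?thesis by (simp add: card_subset_eq)
qed

lemma card_neighbours_le_degree:
  assumes "finite E"
  shows "card {x. {w, x} \<in> E} \<le> degree E w"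
proof -
  have "inj_on (\<lambda>x. {w, x}) {x. {w, x} \<in> E}" by (auto simp: inj_on_def doubleton_eq_iff)
  moreover have "(\<lambda>x. {w, x}) ` {x. {w, x} \<in> E} \<subseteq> {e\<in>E. w \<in> e}" by auto
  ultimately show ?thesis unfolding degree_def using assms by (simp add: card_inj_on_le)
qed

lemma simple_graph_finite_neighbours:
  assumes sg: "simple_graph V E"
  shows "finite {x. {w, x} \<in> E}"
proof -
  have "{x. {w, x} \<in> E} \<subseteq> V" using simple_graph_edgeD[OF sg] by blast
  then show ?thesis using sg finite_subset by (auto simp: simple_graph_def)
qed

context
  fixes V :: "'a set" and E r
  assumes sg: "simple_graph V E" and conn: "connected_graph V E"
    and max_degree: "\<forall>v\<in>V. degree E v \<le> 2" and leaf: "r \<in> V" "degree E r = 1"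
begin

lemma leaf_dist_eq_0_iff: "v \<in> V \<Longrightarrow> dist_from E {r} v = 0 \<longleftrightarrow> v = r"
  using dist_from_eq_0_iff[OF sg conn] leaf by simp

lemma leaf_dist_parent:
  assumes "v \<in> V" "v \<noteq> r"
  obtains w where "w \<in> V" "{w, v} \<in> E" "Suc (dist_from E {r} w) = dist_from E {r} v"
proof (rule dist_from_parent[OF sg conn _ _ assms(1)])
  show "{r} \<subseteq> V" "{r} \<noteq> {}" "v \<notin> {r}" using leaf assms(2) by auto
qed

text \<open>Apart from the leaf r, every vertex spends one of its at most two edges on its parent, leaving
  room for at most one child.\<close>
lemma leaf_dist_children_card_le_1:
  assumes w: "w \<in> V"
  shows "card {x. {w, x} \<in> E \<and> dist_from E {r} x = Suc (dist_from E {r} w)} \<le> 1"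
proof -
  let ?d = "dist_from E {r}" and ?N = "{x. {w, x} \<in> E}"
  have fin: "finite ?N" by (rule simple_graph_finite_neighbours[OF sg])
  have degree_w: "card ?N \<le> degree E w"
    using card_neighbours_le_degree[OF simple_graph_finite_edges[OF sg]] .
  show ?thesis
  proof (cases "w = r")
    case True
    then have "card {x. {w, x} \<in> E \<and> ?d x = Suc (?d w)} \<le> card ?N"
      using fin by (intro card_mono) auto
    then show ?thesis using degree_w leaf(2) True by simp
  next
    case False
    then obtain q where q: "{q, w} \<in> E" "Suc (?d q) = ?d w" using w by (auto elim: leaf_dist_parent)
    then have "{x. {w, x} \<in> E \<and> ?d x = Suc (?d w)} \<subseteq> ?N - {q}" by auto
    then have "card {x. {w, x} \<in> E \<and> ?d x = Suc (?d w)} \<le> card (?N - {q})"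
      using fin by (simp add: card_mono)
    also have "\<dots> = card ?N - 1" using q(1) fin by (simp add: insert_commute)
    also have "\<dots> \<le> 1" using degree_w max_degree w by fastforce
    finally show ?thesis .
  qed
qed

lemma leaf_dist_layer_card_le_1: "card {v\<in>V. dist_from E {r} v = k} \<le> 1"
proof (induction k)
  case 0
  have "{v\<in>V. dist_from E {r} v = 0} \<subseteq> {r}" using leaf_dist_eq_0_iff by auto
  then show ?case using card_mono[of "{r}"] by fastforce
next
  case (Suc k)
  let ?d = "dist_from E {r}" and ?L = "\<lambda>k. {v\<in>V. dist_from E {r} v = k}"
  have parent: "\<exists>w\<in>?L k. {w, v} \<in> E" if "v \<in> ?L (Suc k)" for v
  proof -
    from that have "v \<in> V" "v \<noteq> r" using leaf_dist_eq_0_iff[OF leaf(1)] by auto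
    then obtain w where "w \<in> V" "{w, v} \<in> E" "Suc (?d w) = ?d v" by (rule leaf_dist_parent)
    then show ?thesis using that by auto
  qed
  show ?case
  proof (cases "?L k = {}")
    case True
    then have "?L (Suc k) = {}" using parent by blast
    then show ?thesis by (metis card.empty le0)
  next
    case False
    moreover have "finite (?L k)" using sg by (simp add: simple_graph_def)
    ultimately have "card (?L k) = 1" using Suc.IH by (simp add: le_antisym Suc_leI card_gt_0_iff)
    then obtain w where layer: "?L k = {w}" by (rule card_1_singletonE)
    then have w: "w \<in> V" "?d w = k" by auto
    let ?C = "{x. {w, x} \<in> E \<and> ?d x = Suc (?d w)}"
    have "finite ?C" using simple_graph_finite_neighbours[OF sg, of w] by (rule rev_finite_subset) auto
    moreover have "?L (Suc k) \<subseteq> ?C" using parent layer w(2) by auto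
    ultimately have "card (?L (Suc k)) \<le> card ?C" by (rule card_mono)
    then show ?thesis using leaf_dist_children_card_le_1[OF w(1)] by linarith
  qed
qed

lemma inj_on_leaf_dist: "inj_on (dist_from E {r}) V"
proof (rule inj_onI)
  fix u v assume "u \<in> V" "v \<in> V" "dist_from E {r} u = dist_from E {r} v"
  moreover have "finite V" using sg by (simp add: simple_graph_def)
  ultimately show "u = v"
    using leaf_dist_layer_card_le_1[of "dist_from E {r} u"] by (auto simp: card_le_Suc0_iff_eq)
qed

lemma leaf_dist_edge_iff:
  assumes u: "u \<in> V" and v: "v \<in> V"
  shows "{u, v} \<in> E \<longleftrightarrow> dist_from E {r} v = Suc (dist_from E {r} u) \<or>
    dist_from E {r} u = Suc (dist_from E {r} v)"
proof -
  let ?d = "dist_from E {r}"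
  have child: "{x, y} \<in> E" if xy: "x \<in> V" "y \<in> V" "?d y = Suc (?d x)" for x y
  proof -
    have "y \<noteq> r" using xy dist_from_source[where S = "{r}"] by auto
    then obtain w where "w \<in> V" "{w, y} \<in> E" "Suc (?d w) = ?d y"
      by (rule leaf_dist_parent[OF xy(2)])
    moreover from this have "w = x" using inj_on_leaf_dist xy by (simp add: inj_on_eq_iff)
    ultimately show ?thesis by simp
  qed
  show ?thesis
  proof
    assume e: "{u, v} \<in> E"
    then have "?d u \<noteq> ?d v" using simple_graph_edgeD[OF sg] inj_on_leaf_dist u v by (metis inj_on_eq_iff)
    moreover have "?d v \<le> Suc (?d u)" "?d u \<le> Suc (?d v)"
      using dist_from_edge_le[OF sg conn] e u v leaf by (auto simp: insert_commute)
    ultimately show "?d v = Suc (?d u) \<or> ?d u = Suc (?d v)" by linarith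
  qed (use child[OF u v] child[OF v u] in \<open>auto simp: insert_commute\<close>)
qed

lemma graph_iso_path:
  assumes "card V = n"
  shows "graph_iso V E (path_V n) (path_E n)"
proof -
  let ?d = "dist_from E {r}"
  have "finite V" using sg by (simp add: simple_graph_def)
  then have "?d ` V = {..<n}"
    using inj_on_image_eq_lessThan[OF _ inj_on_leaf_dist] dist_from_intermediate[OF sg conn] leaf assms
    by blast
  then have "bij_betw ?d V (path_V n)"
    using inj_on_leaf_dist by (simp add: bij_betw_def path_V_def atLeast0LessThan)
  moreover have "{u, v} \<in> E \<longleftrightarrow> {?d u, ?d v} \<in> path_E n" if "u \<in> V" "v \<in> V" for u v
    using leaf_dist_edge_iff[OF that] \<open>?d ` V = {..<n}\<close> that
    by (auto simp: doubleton_in_path_E_iff)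
  ultimately show ?thesis unfolding graph_iso_def by blast
qed

end

lemma chem_tree_no_branching_counts:
  assumes "chem_graph n (n - 1) V E" "n \<ge> 3" "degree_count V E 3 = 0"
  shows "m_edges 1 2 E = 2" "m_edges 1 3 E = 0" "m_edges 3 3 E = 0"
  using chem_graph_counts(3)[OF assms(1,2)] chem_tree_pendant_edges[OF assms(1,2)] assms(3) by simp_all

lemma chem_tree_no_branching_iso_path:
  assumes cg: "chem_graph n (n - 1) V E" and n: "n \<ge> 3" and no_branching: "degree_count V E 3 = 0"
  shows "graph_iso V E (path_V n) (path_E n)"
proof -
  have sg: "simple_graph V E" and conn: "connected_graph V E" and cV: "card V = n"
    using cg unfolding chem_graph_def by auto
  have "finite V" using sg by (simp add: simple_graph_def)
  then have "degree E v \<noteq> 3" if "v \<in> V" for v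
    using no_branching that by (auto simp: degree_count_def)
  then have max_degree: "\<forall>v\<in>V. degree E v \<le> 2"
    using chem_graph_degree_cases[OF cg n] by fastforce
  have "degree_count V E 1 = 2"
    using chem_graph_counts(1)[OF cg n] chem_tree_no_branching_counts[OF assms] by simp
  then have "{v\<in>V. degree E v = 1} \<noteq> {}" unfolding degree_count_def by (metis card.empty zero_neq_numeral)
  then obtain r where "r \<in> V" "degree E r = 1" by blast
  then show ?thesis using graph_iso_path[OF sg conn max_degree _ _ cV] by blast
qed

lemma chem_tree_top_index_no_branching:
  assumes "chem_graph n (n - 1) V E" "n \<ge> 3" "degree_count V E 3 = 0"
  shows "top_index c12 c13 c22 c23 c33 E = c22 * (real n + 5) - 6 * c23 + 2 * (c12 - 4*c22 + 3*c23)"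
  using chem_tree_top_index[OF assms(1,2)] chem_tree_no_branching_counts[OF assms] by simp

lemma chem_tree_top_index_branching_less:
  assumes cg: "chem_graph n (n - 1) V E" and n: "n \<ge> 3" and branching: "degree_count V E 3 > 0"
    and ba: "c13 - 3*c22 + 2*c23 < c12 - 4*c22 + 3*c23"
    and ac: "c12 - 4*c22 + 3*c23 < - (c22 - 2*c23 + c33)"
    and c: "- (c22 - 2*c23 + c33) < 0"
  shows "top_index c12 c13 c22 c23 c33 E < c22 * (real n + 5) - 6 * c23 + 2 * (c12 - 4*c22 + 3*c23)"
proof -
  define a b c where "a = c12 - 4*c22 + 3*c23" and "b = c13 - 3*c22 + 2*c23"
    and "c = c22 - 2*c23 + c33"
  define x y z t where "x = real (m_edges 1 2 E)" and "y = real (m_edges 1 3 E)"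
    and "z = real (m_edges 3 3 E)" and "t = real (degree_count V E 3)"
  have xy: "x + y = t + 2" unfolding x_def y_def t_def
    using chem_tree_pendant_edges[OF cg n] by (metis of_nat_add of_nat_numeral)
  have zt: "z + 1 \<le> t" unfolding z_def t_def using chem_tree_m33_less[OF cg branching] by simp
  have "b * y \<le> a * y" using ba by (intro mult_right_mono) (simp_all add: a_def b_def y_def)
  moreover have "c * z \<le> c * (t - 1)" using c zt by (intro mult_left_mono) (simp_all add: c_def)
  ultimately have "a * x + b * y + c * z \<le> a * (x + y) + c * (t - 1)" by (simp add: distrib_left)
  also have "\<dots> = (a + c) * t + 2 * a - c" using xy by (simp add: algebra_simps)
  also have "\<dots> \<le> (a + c) * 1 + 2 * a - c"
  proof -
    have "(a + c) * t \<le> (a + c) * 1"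
      using ac branching by (intro mult_left_mono_neg) (simp_all add: a_def c_def t_def)
    then show ?thesis by simp
  qed
  also have "\<dots> < 2 * a" using ac c by (simp add: a_def c_def)
  finally have "a * x + b * y + c * z < 2 * a" .
  then show ?thesis
    using chem_tree_top_index[OF cg n] by (simp add: a_def b_def c_def x_def y_def z_def)
qed

theorem theorem1:
  fixes n :: nat and c12 c13 c22 c23 c33 :: real
  assumes "n \<ge> 3"
    and "c13 - 3*c22 + 2*c23 < c12 - 4*c22 + 3*c23"
    and "c12 - 4*c22 + 3*c23 < - (c22 - 2*c23 + c33)"
    and "- (c22 - 2*c23 + c33) < 0"
  shows "chem_graph n (n - 1) (path_V n) (path_E n) \<and>
    (\<forall>(V :: 'a set) E. chem_graph n (n - 1) V E \<longrightarrow>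
        top_index c12 c13 c22 c23 c33 E \<le> top_index c12 c13 c22 c23 c33 (path_E n) \<and>
        (top_index c12 c13 c22 c23 c33 E = top_index c12 c13 c22 c23 c33 (path_E n)
           \<longrightarrow> graph_iso V E (path_V n) (path_E n)))"
proof -
  let ?path_value = "c22 * (real n + 5) - 6 * c23 + 2 * (c12 - 4*c22 + 3*c23)"
  have "degree (path_E n) v \<noteq> 3" for v using degree_path_le_2[of n v] by simp
  then have "degree_count (path_V n) (path_E n) 3 = 0" by (simp add: degree_count_def)
  then have path: "top_index c12 c13 c22 c23 c33 (path_E n) = ?path_value"
    using chem_tree_top_index_no_branching[OF chem_graph_path assms(1)] by blast
  have "top_index c12 c13 c22 c23 c33 E \<le> ?path_value \<and>
      (top_index c12 c13 c22 c23 c33 E = ?path_value \<longrightarrow> graph_iso V E (path_V n) (path_E n))"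
    if cg: "chem_graph n (n - 1) V E" for V :: "'a set" and E
  proof (cases "degree_count V E 3 = 0")
    case True
    then show ?thesis using chem_tree_top_index_no_branching[OF cg assms(1)]
        chem_tree_no_branching_iso_path[OF cg assms(1)] by simp
  next
    case False
    then show ?thesis using chem_tree_top_index_branching_less[OF cg assms(1) _ assms(2-4)] by simp
  qed
  then show ?thesis using chem_graph_path path by simp
qed

end
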